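(* Let $F$ satisfy the structure condition (S) with constants $0<\lambda\le\Lambda$ and bounded continuous $b\ge0$, $c\le0$, and $F(x,t,0,0,0)=0$. Fix $\eta\in\mathbb{R}^n$, $x_0\in\mathbb{R}^n$, $R>0$, $t_1<t_2$, and consider the inclined cylinder $$D^I=\{(x,t):|x-[x_0+\eta(t-t_1)]|<R,\ t_1<t\le t_2\}.$$ Let $u$ be a continuous viscosity subsolution (resp. supersolution) of $F(x,t,u,Du,D^2u)-\partial_tu=0$ in $D^I$ (including its upper base $t=t_2$). If $u$ attains its maximum (resp. minimum) $M$ over $D^I$ at the point $(x_0+\eta(t_2-t_1),t_2)$ and $M\ge0$ (resp. $M\le0$), then $u(x_0+\eta(t-t_1),t)=M$ for all $t\in(t_1,t_2)$.
   Context: Structure condition (S): for all $(x,t)$ in the domain, $r,s\in\mathbb{R}$, $p,q\in\mathbb{R}^n$, $M,N$ symmetric $n\times n$ matrices with $N\ge 0$, $$\lambda\,\mathrm{Tr}(N)-b(x,t)|p-q|+c(x,t)(r-s)\le F(x,t,r,p,M+N)-F(x,t,s,q,M)\le \Lambda\,\mathrm{Tr}(N)+b(x,t)|p-q|+c(x,t)(r-s).$$ *)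

theory Defs
  imports "HOL-Analysis.Analysis"
begin

text \<open>Points of space-time are pairs (x,t) with x in R^n (type real^'n) and t real.
  The operator F x t r p X, with X an n x n matrix.\<close>

definition sym_mat :: "real^'n^'n \<Rightarrow> bool" where
  "sym_mat M \<longleftrightarrow> transpose M = M"

definition psd_mat :: "real^'n^'n \<Rightarrow> bool" where
  "psd_mat N \<longleftrightarrow> (\<forall>v. 0 \<le> v \<bullet> (N *v v))"

definition structure_S ::
  "(real^'n \<Rightarrow> real \<Rightarrow> real \<Rightarrow> real^'n \<Rightarrow> real^'n^'n \<Rightarrow> real) \<Rightarrow> real \<Rightarrow> real
   \<Rightarrow> (real^'n \<Rightarrow> real \<Rightarrow> real) \<Rightarrow> (real^'n \<Rightarrow> real \<Rightarrow> real) \<Rightarrow> ((real^'n) \<times> real) set \<Rightarrow> bool" where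
  "structure_S F lam Lam b c Omega \<longleftrightarrow>
    (\<forall>x t r s p q M N. (x, t) \<in> Omega \<longrightarrow> sym_mat M \<longrightarrow> sym_mat N \<longrightarrow> psd_mat N \<longrightarrow>
       lam * trace N - b x t * norm (p - q) + c x t * (r - s) \<le> F x t r p (M + N) - F x t s q M \<and>
       F x t r p (M + N) - F x t s q M \<le> Lam * trace N + b x t * norm (p - q) + c x t * (r - s))"

definition C21_at ::
  "(real^'n \<Rightarrow> real \<Rightarrow> real) \<Rightarrow> (real^'n \<Rightarrow> real \<Rightarrow> real^'n) \<Rightarrow> (real^'n \<Rightarrow> real \<Rightarrow> real^'n^'n)
   \<Rightarrow> (real^'n \<Rightarrow> real \<Rightarrow> real) \<Rightarrow> (real^'n) \<times> real \<Rightarrow> bool" where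
  "C21_at phi phix phixx phit z \<longleftrightarrow>
    (\<exists>U. open U \<and> z \<in> U \<and>
      (\<forall>(x, t)\<in>U.
          ((\<lambda>y. phi y t) has_derivative (\<lambda>h. phix x t \<bullet> h)) (at x) \<and>
          ((\<lambda>y. phix y t) has_derivative (\<lambda>h. phixx x t *v h)) (at x) \<and>
          ((\<lambda>s. phi x s) has_real_derivative phit x t) (at t)) \<and>
      continuous_on U (\<lambda>(x, t). phixx x t) \<and>
      continuous_on U (\<lambda>(x, t). phit x t))"

text \<open>Viscosity subsolution of F(x,t,u,Du,D^2u) - u_t = 0 in the set D (local extrema are
  taken relative to D, so boundary points of D belonging to D, e.g. an upper base, are included).\<close>
definition visc_subsol ::
  "(real^'n \<Rightarrow> real \<Rightarrow> real \<Rightarrow> real^'n \<Rightarrow> real^'n^'n \<Rightarrow> real) \<Rightarrow> ((real^'n) \<times> real) set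
   \<Rightarrow> (real^'n \<Rightarrow> real \<Rightarrow> real) \<Rightarrow> bool" where
  "visc_subsol F D u \<longleftrightarrow>
    (\<forall>x0 t0 phi phix phixx phit. (x0, t0) \<in> D \<longrightarrow> C21_at phi phix phixx phit (x0, t0) \<longrightarrow>
       (\<exists>e>0. \<forall>x t. (x, t) \<in> D \<longrightarrow> dist (x, t) (x0, t0) < e \<longrightarrow>
                u x t - phi x t \<le> u x0 t0 - phi x0 t0) \<longrightarrow>
       F x0 t0 (u x0 t0) (phix x0 t0) (phixx x0 t0) - phit x0 t0 \<ge> 0)"

definition visc_supersol ::
  "(real^'n \<Rightarrow> real \<Rightarrow> real \<Rightarrow> real^'n \<Rightarrow> real^'n^'n \<Rightarrow> real) \<Rightarrow> ((real^'n) \<times> real) set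
   \<Rightarrow> (real^'n \<Rightarrow> real \<Rightarrow> real) \<Rightarrow> bool" where
  "visc_supersol F D u \<longleftrightarrow>
    (\<forall>x0 t0 phi phix phixx phit. (x0, t0) \<in> D \<longrightarrow> C21_at phi phix phixx phit (x0, t0) \<longrightarrow>
       (\<exists>e>0. \<forall>x t. (x, t) \<in> D \<longrightarrow> dist (x, t) (x0, t0) < e \<longrightarrow>
                u x t - phi x t \<ge> u x0 t0 - phi x0 t0) \<longrightarrow>
       F x0 t0 (u x0 t0) (phix x0 t0) (phixx x0 t0) - phit x0 t0 \<le> 0)"

definition inclined_cyl :: "real^'n \<Rightarrow> real^'n \<Rightarrow> real \<Rightarrow> real \<Rightarrow> real \<Rightarrow> ((real^'n) \<times> real) set" where
  "inclined_cyl eta x0 R t1 t2 =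
     {(x, t). norm (x - (x0 + (t - t1) *\<^sub>R eta)) < R \<and> t1 < t \<and> t \<le> t2}"

end

theory Submission
  imports Defs
begin

text \<open>Barrier argument along the axis a(t) = x0 + (t - t1) \<eta> of the cylinder. If u(a(s), s) < M
  for some s < t2, continuity gives a disc |x - a(s)| \<le> \<rho> on which u < M - e. On the tube
  |x - a(t)| \<le> \<rho>, s \<le> t \<le> t2, use the moving Gaussian
  \<phi>(x, t) = -e exp(-K(t - s)) (exp(-\<alpha>|x - a(t)|^2) - exp(-\<alpha>\<rho>^2)).
  It vanishes on the lateral boundary, is at least -e on the bottom and negative at (a(t2), t2), so
  the maximum of u - \<phi> over the tube exceeds M = u(a(t2), t2) and is attained off the bottom and
  the lateral boundary: a local maximum relative to the cylinder.
  For \<alpha> and then K large, the structure condition makes \<phi> a strict classical supersolution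
  wherever u > \<phi> (this needs M \<ge> 0 and c \<le> 0), contradicting the subsolution inequality at that
  maximum. The supersolution case is the subsolution case for -u and -F(x, t, -r, -p, -X), which
  satisfies (S) with the same constants.\<close>

definition outer_prod :: "real^'n \<Rightarrow> real^'n^'n" where
  "outer_prod y = (\<chi> i j. y$i * y$j)"

lemma outer_prod_mult_vec: "outer_prod y *v h = (y \<bullet> h) *\<^sub>R y"
  by (simp add: vec_eq_iff outer_prod_def matrix_vector_mult_def inner_vec_def sum_distrib_left mult_ac)

lemma trace_outer_prod: "trace (outer_prod y) = y \<bullet> y"
  by (simp add: trace_def outer_prod_def inner_vec_def)

lemma trace_scaleR: "trace (k *\<^sub>R (A::real^'n^'n)) = k * trace A"
  by (simp add: trace_def sum_distrib_left)

lemma sym_mat_outer_prod: "sym_mat (outer_prod y)"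
  by (simp add: sym_mat_def outer_prod_def transpose_def vec_eq_iff mult.commute)

lemma sym_mat_zero: "sym_mat 0"
  by (simp add: sym_mat_def transpose_def vec_eq_iff)

lemma sym_mat_mat: "sym_mat (mat k)"
  by (simp add: sym_mat_def)

lemma sym_mat_scaleR: "sym_mat A \<Longrightarrow> sym_mat (k *\<^sub>R A)"
  by (simp add: sym_mat_def transpose_def vec_eq_iff)

lemma sym_mat_diff: "sym_mat A \<Longrightarrow> sym_mat B \<Longrightarrow> sym_mat (A - B)"
  by (simp add: sym_mat_def transpose_def vec_eq_iff)

lemma psd_mat_outer_prod: "psd_mat (outer_prod y)"
  unfolding psd_mat_def outer_prod_mult_vec by (simp add: inner_commute)

lemma psd_mat_zero: "psd_mat 0"
  by (simp add: psd_mat_def)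

lemma psd_mat_mat_1: "psd_mat (mat 1)"
  by (simp add: psd_mat_def)

lemma psd_mat_scaleR: "psd_mat A \<Longrightarrow> 0 \<le> k \<Longrightarrow> psd_mat (k *\<^sub>R A)"
  unfolding psd_mat_def by (simp add: scaleR_matrix_vector_assoc[symmetric])

lemma structure_S_upper_bound:
  assumes S: "structure_S F lam Lam b c D" and xt: "(x, t) \<in> D" and F0: "F x t 0 0 0 = 0"
    and P: "sym_mat P" "psd_mat P" and N: "sym_mat N" "psd_mat N"
  shows "F x t r p (P - N) \<le> Lam * trace P - lam * trace N + b x t * norm p + c x t * r"
proof -
  note S' = S[unfolded structure_S_def, rule_format, OF xt]
  have PN: "sym_mat (P - N)" using P(1) N(1) by (rule sym_mat_diff)
  have "F x t r p (P - N) - F x t 0 0 (P - N) \<le> b x t * norm p + c x t * r"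
    using S'[where M="P - N" and N=0 and r=r and s=0 and p=p and q=0, OF PN sym_mat_zero psd_mat_zero]
    by (simp add: trace_def)
  moreover have "lam * trace N \<le> F x t 0 0 P - F x t 0 0 (P - N)"
    using S'[where M="P - N" and N=N and r=0 and s=0 and p=0 and q=0, OF PN N] by simp
  moreover have "F x t 0 0 P - F x t 0 0 0 \<le> Lam * trace P"
    using S'[where M=0 and N=P and r=0 and s=0 and p=0 and q=0, OF sym_mat_zero P] by simp
  ultimately show ?thesis using F0 by linarith
qed

lemma structure_S_reflect:
  fixes F :: "real^'n \<Rightarrow> real \<Rightarrow> real \<Rightarrow> real^'n \<Rightarrow> real^'n^'n \<Rightarrow> real"
  assumes S: "structure_S F lam Lam b c D"
  shows "structure_S (\<lambda>x t r p X. - F x t (- r) (- p) (- X)) lam Lam b c D"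
  unfolding structure_S_def
proof (intro allI impI)
  fix x t r s and p q :: "real^'n" and M N :: "real^'n^'n"
  assume xt: "(x, t) \<in> D" and M: "sym_mat M" and N: "sym_mat N" "psd_mat N"
  have "sym_mat (- M - N)" using M N by (simp add: sym_mat_def transpose_def vec_eq_iff)
  have eqs: "- M - N + N = - M" "norm (- q - - p) = norm (p - q)" "c x t * (- s - - r) = c x t * (r - s)"
    by (simp_all add: norm_minus_commute algebra_simps)
  have neg_sum: "- (M + N) = - M - N" by simp
  from S[unfolded structure_S_def, rule_format, OF xt \<open>sym_mat (- M - N)\<close> N,
      where r="- s" and s="- r" and p="- q" and q="- p", unfolded eqs]
  show "lam * trace N - b x t * norm (p - q) + c x t * (r - s)
          \<le> - F x t (- r) (- p) (- (M + N)) - - F x t (- s) (- q) (- M) \<and>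
        - F x t (- r) (- p) (- (M + N)) - - F x t (- s) (- q) (- M)
          \<le> Lam * trace N + b x t * norm (p - q) + c x t * (r - s)"
    unfolding neg_sum by linarith
qed

lemma C21_at_uminus:
  assumes "C21_at \<phi> \<phi>x \<phi>xx \<phi>t z"
  shows "C21_at (\<lambda>x t. - \<phi> x t) (\<lambda>x t. - \<phi>x x t) (\<lambda>x t. - \<phi>xx x t) (\<lambda>x t. - \<phi>t x t) z"
proof -
  have neg_mult_vec: "(- A) *v h = - (A *v h)" for A :: "real^'n^'n" and h
    by (simp add: vec_eq_iff matrix_vector_mult_def sum_negf)
  from assms obtain U where U: "open U" "z \<in> U"
    "\<forall>(x, t)\<in>U. ((\<lambda>y. \<phi> y t) has_derivative (\<lambda>h. \<phi>x x t \<bullet> h)) (at x) \<and>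
          ((\<lambda>y. \<phi>x y t) has_derivative (\<lambda>h. \<phi>xx x t *v h)) (at x) \<and>
          ((\<lambda>s. \<phi> x s) has_real_derivative \<phi>t x t) (at t)"
    "continuous_on U (\<lambda>(x, t). \<phi>xx x t)" "continuous_on U (\<lambda>(x, t). \<phi>t x t)"
    unfolding C21_at_def by blast
  show ?thesis
    unfolding C21_at_def
  proof (intro exI[of _ U] conjI ballI)
    fix y assume "y \<in> U"
    moreover obtain x t where y: "y = (x, t)" by fastforce
    ultimately have d: "((\<lambda>y. \<phi> y t) has_derivative (\<lambda>h. \<phi>x x t \<bullet> h)) (at x)"
        "((\<lambda>y. \<phi>x y t) has_derivative (\<lambda>h. \<phi>xx x t *v h)) (at x)"
        "((\<lambda>s. \<phi> x s) has_real_derivative \<phi>t x t) (at t)"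
      using U(3) by auto
    have "((\<lambda>y. - \<phi> y t) has_derivative (\<lambda>h. (- \<phi>x x t) \<bullet> h)) (at x)"
      using has_derivative_minus[OF d(1)] by simp
    moreover have "((\<lambda>y. - \<phi>x y t) has_derivative (\<lambda>h. (- \<phi>xx x t) *v h)) (at x)"
      using has_derivative_minus[OF d(2)] by (simp add: neg_mult_vec)
    moreover have "((\<lambda>s. - \<phi> x s) has_real_derivative - \<phi>t x t) (at t)"
      using DERIV_minus[OF d(3)] .
    ultimately show "case y of (x, t) \<Rightarrow>
        ((\<lambda>y. - \<phi> y t) has_derivative (\<lambda>h. (- \<phi>x x t) \<bullet> h)) (at x) \<and>
        ((\<lambda>y. - \<phi>x y t) has_derivative (\<lambda>h. (- \<phi>xx x t) *v h)) (at x) \<and>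
        ((\<lambda>s. - \<phi> x s) has_real_derivative - \<phi>t x t) (at t)"
      by (simp add: y)
  next
    show "continuous_on U (\<lambda>(x, t). - \<phi>xx x t)" "continuous_on U (\<lambda>(x, t). - \<phi>t x t)"
      using continuous_on_minus[OF U(4)] continuous_on_minus[OF U(5)] by (simp_all add: case_prod_beta)
  qed (use U in auto)
qed

lemma visc_supersol_reflect:
  assumes "visc_supersol F D u"
  shows "visc_subsol (\<lambda>x t r p X. - F x t (- r) (- p) (- X)) D (\<lambda>x t. - u x t)"
  unfolding visc_subsol_def
proof (intro allI impI)
  fix x0 t0 \<phi> \<phi>x \<phi>xx \<phi>t
  assume "(x0, t0) \<in> D" and "C21_at \<phi> \<phi>x \<phi>xx \<phi>t (x0, t0)"
    and "\<exists>e>0. \<forall>x t. (x, t) \<in> D \<longrightarrow> dist (x, t) (x0, t0) < e \<longrightarrow>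
                - u x t - \<phi> x t \<le> - u x0 t0 - \<phi> x0 t0"
  then obtain e where "0 < e" and max: "\<forall>x t. (x, t) \<in> D \<longrightarrow> dist (x, t) (x0, t0) < e \<longrightarrow>
      - u x t - \<phi> x t \<le> - u x0 t0 - \<phi> x0 t0" by blast
  have "\<forall>x t. (x, t) \<in> D \<longrightarrow> dist (x, t) (x0, t0) < e \<longrightarrow> u x0 t0 - - \<phi> x0 t0 \<le> u x t - - \<phi> x t"
    using max by force
  with \<open>0 < e\<close> have "\<exists>e>0. \<forall>x t. (x, t) \<in> D \<longrightarrow> dist (x, t) (x0, t0) < e \<longrightarrow>
      u x0 t0 - - \<phi> x0 t0 \<le> u x t - - \<phi> x t" by blast
  from assms[unfolded visc_supersol_def, rule_format, OF \<open>(x0, t0) \<in> D\<close>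
      C21_at_uminus[OF \<open>C21_at \<phi> \<phi>x \<phi>xx \<phi>t (x0, t0)\<close>] this]
  show "0 \<le> - F x0 t0 (- (- u x0 t0)) (- \<phi>x x0 t0) (- \<phi>xx x0 t0) - \<phi>t x0 t0" by simp
qed

text \<open>With r = |x - a(t)|: for r \<ge> \<rho>/2 the concavity term -2\<alpha>\<lambda>r^2 of the Gaussian dominates,
  for r < \<rho>/2 the Gaussian is at least exp(-\<alpha>\<rho>^2/4) and the time decay \<kappa> dominates.\<close>

lemma gaussian_barrier_inequality:
  fixes L H lam al \<kappa> \<rho> r :: real
  assumes L: "0 \<le> L" and H: "0 \<le> H" and lam: "0 \<le> lam" and \<rho>: "0 < \<rho>"
    and r: "0 \<le> r" "r \<le> \<rho>"
    and al: "0 < al" "L + H * \<rho> < 2 * al * lam * (\<rho>/2)\<^sup>2"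
    and \<kappa>: "2 * al * (L + H * \<rho>) < \<kappa> * (exp (- al * (\<rho>/2)\<^sup>2) - exp (- al * \<rho>\<^sup>2))"
  shows "exp (- al * r\<^sup>2) * (2 * al * (L + H * r - 2 * al * lam * r\<^sup>2))
           < \<kappa> * (exp (- al * r\<^sup>2) - exp (- al * \<rho>\<^sup>2))"
proof -
  define Er Eh Es where "Er = exp (- al * \<rho>\<^sup>2)" and "Eh = exp (- al * (\<rho>/2)\<^sup>2)"
    and "Es = exp (- al * r\<^sup>2)"
  define A B where "A = 2 * al * (L + H * \<rho>)" and "B = 2 * al * (L + H * r - 2 * al * lam * r\<^sup>2)"
  have EhEr: "Er < Eh" unfolding Er_def Eh_def using al \<rho> by (simp add: power2_eq_square)
  have ErEs: "Er \<le> Es" unfolding Er_def Es_def using al r by (simp add: power_mono)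
  have Es: "0 < Es" "Es \<le> 1" unfolding Es_def using al by simp_all
  have A: "0 \<le> A" unfolding A_def using al L H \<rho> by simp
  have Hr: "H * r \<le> H * \<rho>" using H r by (intro mult_left_mono)
  have "0 < \<kappa> * (Eh - Er)" using \<kappa> A unfolding A_def Eh_def Er_def by linarith
  then have \<kappa>0: "0 \<le> \<kappa>" using EhEr by (simp add: zero_less_mult_iff)
  have "Es * B < \<kappa> * (Es - Er)"
  proof (cases "\<rho>/2 \<le> r")
    case True
    have "(\<rho>/2)\<^sup>2 \<le> r\<^sup>2" using True \<rho> by (intro power_mono) auto
    then have "2 * al * lam * (\<rho>/2)\<^sup>2 \<le> 2 * al * lam * r\<^sup>2"
      using al lam by (intro mult_left_mono) auto
    then have "L + H * r - 2 * al * lam * r\<^sup>2 < 0" using al Hr by linarith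
    then have "B < 0" unfolding B_def using al by (simp add: mult_pos_neg)
    then have "Es * B < 0" using Es by (simp add: mult_pos_neg)
    moreover have "0 \<le> \<kappa> * (Es - Er)" using \<kappa>0 ErEs by simp
    ultimately show ?thesis by linarith
  next
    case False
    have "r\<^sup>2 \<le> (\<rho>/2)\<^sup>2" using False r by (intro power_mono) auto
    then have "Eh \<le> Es" unfolding Eh_def Es_def using al by simp
    have "0 \<le> al * lam * r\<^sup>2" using al lam by simp
    then have "B \<le> A" unfolding A_def B_def using al Hr by (intro mult_left_mono) auto
    have "Es * B \<le> A"
    proof (cases "0 \<le> B")
      case True
      then have "Es * B \<le> B" using Es by (simp add: mult_left_le_one_le)
      then show ?thesis using \<open>B \<le> A\<close> by linarith
    next
      case False
      then have "Es * B < 0" using Es by (simp add: mult_pos_neg)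
      then show ?thesis using A by linarith
    qed
    also have "A < \<kappa> * (Eh - Er)" using \<kappa> unfolding A_def Eh_def Er_def .
    also have "\<dots> \<le> \<kappa> * (Es - Er)" using \<kappa>0 \<open>Eh \<le> Es\<close> by (intro mult_left_mono) auto
    finally show ?thesis .
  qed
  then show ?thesis unfolding Es_def Er_def B_def .
qed

lemma gaussian_barrier_parameters:
  fixes L H lam \<rho> :: real
  assumes L: "0 \<le> L" and H: "0 \<le> H" and lam: "0 < lam" and \<rho>: "0 < \<rho>"
  obtains al \<kappa> where "0 < al" "L + H * \<rho> < 2 * al * lam * (\<rho>/2)\<^sup>2"
    "2 * al * (L + H * \<rho>) < \<kappa> * (exp (- al * (\<rho>/2)\<^sup>2) - exp (- al * \<rho>\<^sup>2))"
proof -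
  define al where "al = 2 * (L + H * \<rho> + 1) / (lam * \<rho>\<^sup>2)"
  define d where "d = exp (- al * (\<rho>/2)\<^sup>2) - exp (- al * \<rho>\<^sup>2)"
  have al: "0 < al" unfolding al_def using L H lam \<rho> by (simp add: add_nonneg_pos)
  have "2 * al * lam * (\<rho>/2)\<^sup>2 = L + H * \<rho> + 1"
    unfolding al_def using lam \<rho> by (simp add: field_simps power2_eq_square)
  then have "L + H * \<rho> < 2 * al * lam * (\<rho>/2)\<^sup>2" by simp
  moreover have "0 < d" unfolding d_def using al \<rho> by (simp add: power2_eq_square)
  then have "(2 * al * (L + H * \<rho>) / d + 1) * d = 2 * al * (L + H * \<rho>) + d"
    by (simp add: distrib_right)
  then have "2 * al * (L + H * \<rho>) < (2 * al * (L + H * \<rho>) / d + 1) * d" using \<open>0 < d\<close> by linarith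
  ultimately show ?thesis using that al unfolding d_def by blast
qed

locale moving_gaussian_barrier =
  fixes x0 eta :: "real^'n" and t1 al e K s Er :: real
begin

definition center :: "real \<Rightarrow> real^'n" where
  "center t = x0 + (t - t1) *\<^sub>R eta"

definition gauss :: "real^'n \<Rightarrow> real \<Rightarrow> real" where
  "gauss x t = exp (- al * ((x - center t) \<bullet> (x - center t)))"

definition decay :: "real \<Rightarrow> real" where
  "decay t = exp (- K * (t - s))"

definition barrier :: "real^'n \<Rightarrow> real \<Rightarrow> real" where
  "barrier x t = - e * decay t * (gauss x t - Er)"

definition barrier_x :: "real^'n \<Rightarrow> real \<Rightarrow> real^'n" where
  "barrier_x x t = (2 * al * e * decay t * gauss x t) *\<^sub>R (x - center t)"

definition barrier_xx :: "real^'n \<Rightarrow> real \<Rightarrow> real^'n^'n" where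
  "barrier_xx x t = (2 * al * e * decay t * gauss x t) *\<^sub>R (mat 1 - (2 * al) *\<^sub>R outer_prod (x - center t))"

definition barrier_t :: "real^'n \<Rightarrow> real \<Rightarrow> real" where
  "barrier_t x t = e * K * decay t * (gauss x t - Er)
     - 2 * al * e * decay t * gauss x t * ((x - center t) \<bullet> eta)"

lemma barrier_center_neg: "0 < e \<Longrightarrow> Er < 1 \<Longrightarrow> barrier (center t) t < 0"
  by (simp add: barrier_def gauss_def decay_def)

lemma barrier_lower_bound:
  assumes "0 \<le> e" "0 \<le> al" "0 \<le> Er"
  shows "- e * decay t \<le> barrier x t"
proof -
  have "0 \<le> al * ((x - center t) \<bullet> (x - center t))" using assms by simp
  then have "gauss x t \<le> 1" unfolding gauss_def by simp
  then have "gauss x t - Er \<le> 1" using assms by linarith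
  then show ?thesis using assms by (simp add: barrier_def decay_def mult_left_le)
qed

lemma barrier_on_sphere:
  "norm (x - center t) = \<rho> \<Longrightarrow> Er = exp (- al * \<rho>\<^sup>2) \<Longrightarrow> barrier x t = 0"
  by (unfold barrier_def gauss_def) (simp flip: power2_norm_eq_inner)

lemma continuous_on_barrier: "continuous_on UNIV (\<lambda>(x, t). barrier x t)"
  unfolding barrier_def decay_def gauss_def center_def case_prod_beta by (intro continuous_intros)

lemma has_derivative_barrier_x:
  "((\<lambda>y. barrier y t) has_derivative (\<lambda>h. barrier_x x t \<bullet> h)) (at x)"
  unfolding barrier_def barrier_x_def gauss_def
  by (rule derivative_eq_intros refl | simp)+ (simp add: inner_commute algebra_simps)

lemma has_derivative_barrier_xx:
  "((\<lambda>y. barrier_x y t) has_derivative (\<lambda>h. barrier_xx x t *v h)) (at x)"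
  unfolding barrier_x_def barrier_xx_def gauss_def
  by (rule derivative_eq_intros refl | simp)+
    (simp add: scaleR_matrix_vector_assoc[symmetric] outer_prod_mult_vec inner_commute algebra_simps)

lemma has_real_derivative_barrier_t:
  "((\<lambda>t. barrier x t) has_real_derivative barrier_t x t) (at t)"
proof -
  have dist_sq: "(x - center t) \<bullet> (x - center t)
     = (x - x0) \<bullet> (x - x0) - 2 * (t - t1) * ((x - x0) \<bullet> eta) + (t - t1)\<^sup>2 * (eta \<bullet> eta)" for t
    by (simp add: center_def algebra_simps inner_commute power2_eq_square)
  show ?thesis
    unfolding barrier_def barrier_t_def gauss_def decay_def dist_sq
    by (rule derivative_eq_intros refl | simp)+
      (simp add: center_def algebra_simps inner_commute power2_eq_square)
qed

lemma C21_at_barrier: "C21_at barrier barrier_x barrier_xx barrier_t z"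
  unfolding C21_at_def
proof (intro exI[of _ UNIV] conjI ballI)
  show "continuous_on UNIV (\<lambda>(x, t). barrier_xx x t)"
    unfolding barrier_xx_def gauss_def decay_def center_def outer_prod_def case_prod_beta
    by (intro continuous_intros)
  show "continuous_on UNIV (\<lambda>(x, t). barrier_t x t)"
    unfolding barrier_t_def gauss_def decay_def center_def case_prod_beta
    by (intro continuous_intros)
qed (auto simp: has_derivative_barrier_x has_derivative_barrier_xx has_real_derivative_barrier_t)

lemma barrier_strict_supersolution:
  assumes S: "structure_S F lam Lam b c D" and xt: "(x, t) \<in> D" and F0: "F x t 0 0 0 = 0"
    and b: "0 \<le> b x t" "b x t \<le> Bb" and c: "- Cc \<le> c x t" "c x t \<le> 0"
    and lam: "0 \<le> lam" "0 \<le> Lam" and \<rho>: "0 < \<rho>" and e: "0 < e"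
    and al: "0 < al" "real CARD('n) * Lam + (Bb + norm eta) * \<rho> < 2 * al * lam * (\<rho>/2)\<^sup>2"
    and K: "2 * al * (real CARD('n) * Lam + (Bb + norm eta) * \<rho>)
              < (K - Cc) * (exp (- al * (\<rho>/2)\<^sup>2) - exp (- al * \<rho>\<^sup>2))"
    and Er: "Er = exp (- al * \<rho>\<^sup>2)"
    and near: "norm (x - center t) \<le> \<rho>" and above: "barrier x t < v"
  shows "F x t v (barrier_x x t) (barrier_xx x t) - barrier_t x t < 0"
proof -
  define y r Es G where "y = x - center t" and "r = norm y" and "Es = gauss x t" and "G = decay t"
  define c0 where "c0 = 2 * al * e * G * Es"
  define L H where "L = real CARD('n) * Lam" and "H = Bb + norm eta"
  have G: "0 < G" by (simp add: G_def decay_def)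
  have Es_r: "Es = exp (- al * r\<^sup>2)" by (simp add: Es_def gauss_def r_def y_def power2_norm_eq_inner)
  have r: "0 \<le> r" "r \<le> \<rho>" using near by (simp_all add: r_def y_def)
  have ErEs: "Er \<le> Es" unfolding Er Es_r using al r by (simp add: power_mono)
  have c0: "0 < c0" unfolding c0_def Es_r using al e G by simp
  have Bb: "0 \<le> Bb" and Cc: "0 \<le> Cc" using b c by linarith+
  have P: "sym_mat (c0 *\<^sub>R mat 1)" "psd_mat (c0 *\<^sub>R mat 1)"
    using c0 by (auto intro: sym_mat_scaleR sym_mat_mat psd_mat_scaleR psd_mat_mat_1)
  have N: "sym_mat ((2 * al * c0) *\<^sub>R outer_prod y)" "psd_mat ((2 * al * c0) *\<^sub>R outer_prod y)"
    using c0 al by (auto intro: sym_mat_scaleR sym_mat_outer_prod psd_mat_scaleR psd_mat_outer_prod)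
  have "barrier_xx x t = c0 *\<^sub>R mat 1 - (2 * al * c0) *\<^sub>R outer_prod y"
    by (simp add: barrier_xx_def c0_def G_def Es_def y_def algebra_simps)
  then have "F x t v (barrier_x x t) (barrier_xx x t)
      \<le> Lam * (c0 * CARD('n)) - lam * (2 * al * c0 * r\<^sup>2) + b x t * (c0 * r) + c x t * v"
    using structure_S_upper_bound[OF S xt F0 P N, of v "c0 *\<^sub>R y"] c0
    by (simp add: barrier_x_def c0_def G_def Es_def y_def r_def trace_scaleR trace_I
        trace_outer_prod power2_norm_eq_inner)
  moreover have "b x t * (c0 * r) \<le> Bb * (c0 * r)" using b c0 r by (intro mult_right_mono) auto
  moreover have "c x t * v \<le> Cc * (e * G * (Es - Er))"
  proof -
    have "- (e * G * (Es - Er)) < v" using above by (simp add: barrier_def G_def Es_def)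
    then have "c x t * v \<le> c x t * - (e * G * (Es - Er))" using c by (intro mult_left_mono_neg) auto
    also have "\<dots> = (- c x t) * (e * G * (Es - Er))" by simp
    also have "\<dots> \<le> Cc * (e * G * (Es - Er))" using c e G ErEs by (intro mult_right_mono) auto
    finally show ?thesis .
  qed
  moreover have "- (c0 * r * norm eta) \<le> - (c0 * (y \<bullet> eta))"
    using c0 Cauchy_Schwarz_ineq2[of y eta] by (simp add: r_def)
  ultimately have "F x t v (barrier_x x t) (barrier_xx x t) - barrier_t x t
      \<le> e * G * (Es * (2 * al * (L + H * r - 2 * al * lam * r\<^sup>2)) - (K - Cc) * (Es - Er))"
    by (simp add: barrier_t_def c0_def G_def Es_def y_def L_def H_def algebra_simps power2_eq_square)
  also have "\<dots> < 0"
    using gaussian_barrier_inequality[of L H lam \<rho> r al "K - Cc"] al K Er e G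
    unfolding L_def H_def Es_r by (simp add: mult_pos_neg lam r \<rho> Bb)
  finally show ?thesis .
qed

end

lemma continuous_on_below_on_cball:
  fixes u :: "real^'n \<Rightarrow> real \<Rightarrow> real"
  assumes u: "continuous_on D (\<lambda>(x, t). u x t)" and R: "0 < R"
    and slice: "\<And>x. norm (x - y) < R \<Longrightarrow> (x, s) \<in> D" and below: "u y s < m"
  obtains \<rho> where "0 < \<rho>" "\<rho> < R" "\<And>x. norm (x - y) \<le> \<rho> \<Longrightarrow> u x s < m"
proof -
  have "(y, s) \<in> D" using slice R by simp
  then obtain r where r: "0 < r"
    "\<forall>z\<in>D. dist z (y, s) < r \<longrightarrow> dist ((\<lambda>(x, t). u x t) z) ((\<lambda>(x, t). u x t) (y, s)) < m - u y s"
    using u below unfolding continuous_on_iff by (metis diff_gt_0_iff_gt)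
  show ?thesis
  proof
    show "0 < min r R / 2" "min r R / 2 < R" using r R by auto
    fix x assume "norm (x - y) \<le> min r R / 2"
    then have "(x, s) \<in> D" "dist (x, s) (y, s) < r"
      using slice r R by (auto simp: dist_Pair_Pair dist_norm)
    then have "\<bar>u x s - u y s\<bar> < m - u y s" using r(2) by (fastforce simp: dist_real_def)
    then show "u x s < m" by linarith
  qed
qed

lemma exists_local_max_in_tube:
  fixes u \<phi> :: "real^'n \<Rightarrow> real \<Rightarrow> real" and a :: "real \<Rightarrow> real^'n" and s t2 \<rho> M :: real
  defines "Q \<equiv> {(x, t). s \<le> t \<and> t \<le> t2 \<and> norm (x - a t) \<le> \<rho>}"
  assumes QD: "Q \<subseteq> D" and below: "\<forall>(x, t)\<in>D. t \<le> t2"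
    and a: "continuous_on UNIV a"
    and u: "continuous_on D (\<lambda>(x, t). u x t)" and \<phi>: "continuous_on UNIV (\<lambda>(x, t). \<phi> x t)"
    and st: "s \<le> t2" and \<rho>: "0 \<le> \<rho>"
    and top: "M < u (a t2) t2 - \<phi> (a t2) t2"
    and bottom: "\<And>x. norm (x - a s) \<le> \<rho> \<Longrightarrow> u x s - \<phi> x s \<le> M"
    and lateral: "\<And>x t. s \<le> t \<Longrightarrow> t \<le> t2 \<Longrightarrow> norm (x - a t) = \<rho> \<Longrightarrow> u x t - \<phi> x t \<le> M"
  obtains xs ts where "(xs, ts) \<in> D" "norm (xs - a ts) \<le> \<rho>" "M < u xs ts - \<phi> xs ts"
    "\<exists>e>0. \<forall>x t. (x, t) \<in> D \<longrightarrow> dist (x, t) (xs, ts) < e \<longrightarrow> u x t - \<phi> x t \<le> u xs ts - \<phi> xs ts"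
proof -
  define w where "w = (\<lambda>(x, t). u x t - \<phi> x t)"
  have Q_image: "Q = (\<lambda>(y, t). (y + a t, t)) ` (cball 0 \<rho> \<times> {s..t2})"
    unfolding Q_def by (auto simp: image_iff) (metis diff_add_cancel dist_0_norm mem_cball)
  have a_snd: "continuous_on UNIV (\<lambda>z::(real^'n) \<times> real. a (snd z))"
    using continuous_on_compose2[OF a continuous_on_snd[OF continuous_on_id]] by simp
  then have "continuous_on UNIV (\<lambda>(y, t). (y + a t, t))"
    unfolding case_prod_beta by (intro continuous_intros)
  then have "compact Q"
    unfolding Q_image
    by (rule compact_continuous_image[OF continuous_on_subset[OF _ subset_UNIV]])
      (simp_all add: compact_Times)
  moreover have "continuous_on Q w"
    using continuous_on_diff[OF continuous_on_subset[OF u QD] continuous_on_subset[OF \<phi> subset_UNIV]]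
    unfolding w_def case_prod_beta .
  moreover have top_Q: "(a t2, t2) \<in> Q" using st \<rho> by (simp add: Q_def)
  ultimately obtain xs ts where max: "(xs, ts) \<in> Q" "\<forall>z\<in>Q. w z \<le> w (xs, ts)"
    using continuous_attains_sup[of Q w] by fastforce
  have M: "M < u xs ts - \<phi> xs ts" using max(2) top_Q top by (fastforce simp: w_def)
  have "ts \<noteq> s"
  proof
    assume "ts = s"
    then have "u xs ts - \<phi> xs ts \<le> M" using max(1) bottom by (simp add: Q_def)
    then show False using M by simp
  qed
  moreover have "norm (xs - a ts) \<noteq> \<rho>"
  proof
    assume "norm (xs - a ts) = \<rho>"
    then have "u xs ts - \<phi> xs ts \<le> M" using max(1) lateral by (simp add: Q_def)
    then show False using M by simp
  qed
  ultimately have inside: "s < ts" "norm (xs - a ts) < \<rho>" using max(1) by (auto simp: Q_def)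
  have "open {z. s < snd z \<and> norm (fst z - a (snd z)) < \<rho>}"
    using a_snd by (intro open_Collect_conj open_Collect_less continuous_intros)
  moreover have "(xs, ts) \<in> {z. s < snd z \<and> norm (fst z - a (snd z)) < \<rho>}" using inside by simp
  ultimately obtain e where e: "0 < e" "ball (xs, ts) e \<subseteq> {z. s < snd z \<and> norm (fst z - a (snd z)) < \<rho>}"
    using open_contains_ball_eq by blast
  have "\<forall>x t. (x, t) \<in> D \<longrightarrow> dist (x, t) (xs, ts) < e \<longrightarrow> u x t - \<phi> x t \<le> u xs ts - \<phi> xs ts"
  proof (intro allI impI)
    fix x t assume xt: "(x, t) \<in> D" "dist (x, t) (xs, ts) < e"
    have "(x, t) \<in> ball (xs, ts) e" using xt(2) by (simp add: dist_commute)
    then have "s < t" "norm (x - a t) < \<rho>" using e(2) by auto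
    moreover have "t \<le> t2" using below xt(1) by auto
    ultimately have "(x, t) \<in> Q" by (simp add: Q_def)
    then show "u x t - \<phi> x t \<le> u xs ts - \<phi> xs ts" using max(2) by (auto simp: w_def)
  qed
  moreover have "(xs, ts) \<in> D" using max(1) QD by auto
  ultimately show ?thesis using that M e(1) inside(2) by (meson less_imp_le)
qed

lemma visc_subsol_max_along_axis:
  fixes F :: "real^'n \<Rightarrow> real \<Rightarrow> real \<Rightarrow> real^'n \<Rightarrow> real^'n^'n \<Rightarrow> real"
    and b c u :: "real^'n \<Rightarrow> real \<Rightarrow> real" and eta x0 :: "real^'n"
    and lam Lam Bb Cc R t1 t2 M s :: real
  defines "D \<equiv> inclined_cyl eta x0 R t1 t2"
  assumes lam: "0 < lam" "lam \<le> Lam" and S: "structure_S F lam Lam b c D"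
    and b: "\<forall>(x, t)\<in>D. 0 \<le> b x t \<and> b x t \<le> Bb" and c: "\<forall>(x, t)\<in>D. - Cc \<le> c x t \<and> c x t \<le> 0"
    and F0: "\<forall>(x, t)\<in>D. F x t 0 0 0 = 0" and R: "0 < R"
    and u: "continuous_on D (\<lambda>(x, t). u x t)" and sub: "visc_subsol F D u"
    and top: "u (x0 + (t2 - t1) *\<^sub>R eta) t2 = M" and max: "\<forall>(x, t)\<in>D. u x t \<le> M" and M: "0 \<le> M"
    and s: "t1 < s" "s < t2"
  shows "u (x0 + (s - t1) *\<^sub>R eta) s = M"
proof (rule ccontr)
  define a where "a t = x0 + (t - t1) *\<^sub>R eta" for t
  have in_D: "(x, t) \<in> D \<longleftrightarrow> norm (x - a t) < R \<and> t1 < t \<and> t \<le> t2" for x t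
    by (simp add: D_def inclined_cyl_def a_def)
  assume "u (x0 + (s - t1) *\<^sub>R eta) s \<noteq> M"
  then have "u (a s) s < M" using max in_D[of "a s" s] s R by (fastforce simp: a_def)
  define e where "e = (M - u (a s) s) / 2"
  have e: "0 < e" using \<open>u (a s) s < M\<close> by (simp add: e_def)
  have "u (a s) s < M - e" using \<open>u (a s) s < M\<close> unfolding e_def by (simp add: field_simps)
  obtain \<rho> where \<rho>: "0 < \<rho>" "\<rho> < R" and bottom: "\<And>x. norm (x - a s) \<le> \<rho> \<Longrightarrow> u x s < M - e"
    by (rule continuous_on_below_on_cball[OF u R _ \<open>u (a s) s < M - e\<close>]) (use in_D s in auto)
  have Bb: "0 \<le> Bb" and Cc: "0 \<le> Cc" using b c in_D[of "a t2" t2] s R by (auto simp: a_def)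
  obtain al \<kappa> where al: "0 < al" "real CARD('n) * Lam + (Bb + norm eta) * \<rho> < 2 * al * lam * (\<rho>/2)\<^sup>2"
    and \<kappa>: "2 * al * (real CARD('n) * Lam + (Bb + norm eta) * \<rho>)
              < \<kappa> * (exp (- al * (\<rho>/2)\<^sup>2) - exp (- al * \<rho>\<^sup>2))"
    using gaussian_barrier_parameters[of "real CARD('n) * Lam" "Bb + norm eta" lam \<rho>] lam \<rho> Bb by auto
  define Er where "Er = exp (- al * \<rho>\<^sup>2)"
  have Er: "0 < Er" "Er < 1" unfolding Er_def using al \<rho> by simp_all
  interpret moving_gaussian_barrier x0 eta t1 al e "Cc + \<kappa>" s Er .
  have center: "center = a" by (simp add: center_def a_def fun_eq_iff)
  obtain xs ts where xs: "(xs, ts) \<in> D" "norm (xs - a ts) \<le> \<rho>" "M < u xs ts - barrier xs ts"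
    and local_max: "\<exists>e>0. \<forall>x t. (x, t) \<in> D \<longrightarrow> dist (x, t) (xs, ts) < e \<longrightarrow>
        u x t - barrier x t \<le> u xs ts - barrier xs ts"
  proof (rule exists_local_max_in_tube[of s t2 a \<rho> D u barrier M])
    show "{(x, t). s \<le> t \<and> t \<le> t2 \<and> norm (x - a t) \<le> \<rho>} \<subseteq> D" using in_D s \<rho> by auto
    show "continuous_on UNIV a" unfolding a_def by (intro continuous_intros)
    show "M < u (a t2) t2 - barrier (a t2) t2"
      using barrier_center_neg[OF e Er(2), of t2] top by (simp add: center a_def)
    show "u x s - barrier x s \<le> M" if "norm (x - a s) \<le> \<rho>" for x
      using barrier_lower_bound[of s x] bottom[OF that] e al Er by (simp add: decay_def)
    show "u x t - barrier x t \<le> M" if "s \<le> t" "t \<le> t2" "norm (x - a t) = \<rho>" for x t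
      using barrier_on_sphere[of x t \<rho>] max in_D[of x t] that s \<rho> by (auto simp: center Er_def)
  qed (use s \<rho> u in_D continuous_on_barrier in auto)
  have "0 \<le> F xs ts (u xs ts) (barrier_x xs ts) (barrier_xx xs ts) - barrier_t xs ts"
    using sub[unfolded visc_subsol_def, rule_format, OF xs(1) C21_at_barrier local_max] .
  moreover have "F xs ts (u xs ts) (barrier_x xs ts) (barrier_xx xs ts) - barrier_t xs ts < 0"
    using barrier_strict_supersolution[OF S xs(1)] F0 b c xs lam e \<rho> al \<kappa> M
    unfolding Er_def center by fastforce
  ultimately show False by simp
qed

theorem lemma3p3:
  fixes F :: "real^'n \<Rightarrow> real \<Rightarrow> real \<Rightarrow> real^'n \<Rightarrow> real^'n^'n \<Rightarrow> real"
    and b c :: "real^'n \<Rightarrow> real \<Rightarrow> real"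
    and u :: "real^'n \<Rightarrow> real \<Rightarrow> real"
    and eta x0 :: "real^'n"
    and lam Lam R t1 t2 M :: real
  defines "D \<equiv> inclined_cyl eta x0 R t1 t2"
  assumes lam: "0 < lam" "lam \<le> Lam"
    and S: "structure_S F lam Lam b c D"
    and b: "\<forall>(x, t)\<in>D. 0 \<le> b x t" "bounded ((\<lambda>(x, t). b x t) ` D)" "continuous_on D (\<lambda>(x, t). b x t)"
    and c: "\<forall>(x, t)\<in>D. c x t \<le> 0" "bounded ((\<lambda>(x, t). c x t) ` D)" "continuous_on D (\<lambda>(x, t). c x t)"
    and F0: "\<forall>(x, t)\<in>D. F x t 0 0 0 = 0"
    and R: "0 < R" and t12: "t1 < t2"
    and ucont: "continuous_on D (\<lambda>(x, t). u x t)"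
  shows "(visc_subsol F D u \<and> u (x0 + (t2 - t1) *\<^sub>R eta) t2 = M \<and> (\<forall>(x, t)\<in>D. u x t \<le> M) \<and> 0 \<le> M
            \<longrightarrow> (\<forall>t. t1 < t \<and> t < t2 \<longrightarrow> u (x0 + (t - t1) *\<^sub>R eta) t = M))
       \<and> (visc_supersol F D u \<and> u (x0 + (t2 - t1) *\<^sub>R eta) t2 = M \<and> (\<forall>(x, t)\<in>D. M \<le> u x t) \<and> M \<le> 0
            \<longrightarrow> (\<forall>t. t1 < t \<and> t < t2 \<longrightarrow> u (x0 + (t - t1) *\<^sub>R eta) t = M))"
proof -
  obtain Bb Cc where "\<forall>z\<in>(\<lambda>(x, t). b x t) ` D. norm z \<le> Bb" "\<forall>z\<in>(\<lambda>(x, t). c x t) ` D. norm z \<le> Cc"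
    using b(2) c(2) bounded_iff by meson
  then have b_bounds: "\<forall>(x, t)\<in>D. 0 \<le> b x t \<and> b x t \<le> Bb"
    and c_bounds: "\<forall>(x, t)\<in>D. - Cc \<le> c x t \<and> c x t \<le> 0"
    using b(1) c(1) by fastforce+
  note along_axis = visc_subsol_max_along_axis[OF lam _ b_bounds[unfolded D_def] c_bounds[unfolded D_def] _ R,
      folded D_def]
  show ?thesis
  proof (intro conjI impI allI; elim conjE)
    fix t assume "visc_subsol F D u" "u (x0 + (t2 - t1) *\<^sub>R eta) t2 = M" "\<forall>(x, t)\<in>D. u x t \<le> M"
      "0 \<le> M" "t1 < t" "t < t2"
    from along_axis[OF S F0 ucont this] show "u (x0 + (t - t1) *\<^sub>R eta) t = M" .
  next
    fix t assume sup: "visc_supersol F D u" and top: "u (x0 + (t2 - t1) *\<^sub>R eta) t2 = M"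
      and min: "\<forall>(x, t)\<in>D. M \<le> u x t" and M: "M \<le> 0" and t: "t1 < t" "t < t2"
    have "continuous_on D (\<lambda>(x, t). - u x t)"
      using continuous_on_minus[OF ucont] by (simp add: case_prod_beta)
    moreover have "\<forall>(x, t)\<in>D. - F x t (- 0) (- 0) (- 0) = 0" using F0 by auto
    moreover have "\<forall>(x, t)\<in>D. - u x t \<le> - M" using min by auto
    ultimately have "- u (x0 + (t - t1) *\<^sub>R eta) t = - M"
      using along_axis[OF structure_S_reflect[OF S] _ _ visc_supersol_reflect[OF sup] _ _ _ t] top M
      by simp
    then show "u (x0 + (t - t1) *\<^sub>R eta) t = M" by simp
  qed
qed

end
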